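(* Let $p\in\mathbb{Z}[x_1,x_2,x_3,x_4,x_5,x_6]$. If $p(\sin\alpha_1,\sin\alpha_2,\sin\alpha_3,\cos\alpha_1,\cos\alpha_2,\cos\alpha_3)=0$ holds for the interior angles $\alpha_1,\alpha_2,\alpha_3$ of some generic Euclidean triangle, then it holds for the interior angles of every Euclidean triangle.
   Context: A Euclidean triangle with edge lengths $\ell_1,\ell_2,\ell_3$ is generic if for some real $k>0$ the numbers $k\ell_1,k\ell_2,k\ell_3$ are algebraically independent over $\mathbb{Q}$ (no nonzero integer polynomial in three variables vanishes on them). The angle $\alpha_i$ is the interior angle opposite the edge of length $\ell_i$. *)

theory Defs
  imports Complex_Main
begin

text \<open>Integer polynomials in several variables are represented by their coefficient
  function on exponent tuples, required to have finite support.\<close>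

type_synonym exp3 = "nat \<times> nat \<times> nat"
type_synonym exp6 = "nat \<times> nat \<times> nat \<times> nat \<times> nat \<times> nat"

definition int_poly3 :: "(exp3 \<Rightarrow> int) \<Rightarrow> bool" where
  "int_poly3 c \<longleftrightarrow> finite {m. c m \<noteq> 0}"

definition int_poly6 :: "(exp6 \<Rightarrow> int) \<Rightarrow> bool" where
  "int_poly6 c \<longleftrightarrow> finite {m. c m \<noteq> 0}"

definition eval3 :: "(exp3 \<Rightarrow> int) \<Rightarrow> real \<Rightarrow> real \<Rightarrow> real \<Rightarrow> real" where
  "eval3 c x1 x2 x3 =
     (\<Sum>(a1, a2, a3)\<in>{m. c m \<noteq> 0}. of_int (c (a1, a2, a3)) * x1 ^ a1 * x2 ^ a2 * x3 ^ a3)"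

definition eval6 :: "(exp6 \<Rightarrow> int) \<Rightarrow> real \<Rightarrow> real \<Rightarrow> real \<Rightarrow> real \<Rightarrow> real \<Rightarrow> real \<Rightarrow> real" where
  "eval6 c x1 x2 x3 x4 x5 x6 =
     (\<Sum>(a1, a2, a3, a4, a5, a6)\<in>{m. c m \<noteq> 0}.
        of_int (c (a1, a2, a3, a4, a5, a6)) * x1 ^ a1 * x2 ^ a2 * x3 ^ a3 * x4 ^ a4 * x5 ^ a5 * x6 ^ a6)"

definition alg_indep3 :: "real \<Rightarrow> real \<Rightarrow> real \<Rightarrow> bool" where
  "alg_indep3 x1 x2 x3 \<longleftrightarrow>
     (\<forall>c. int_poly3 c \<and> c \<noteq> (\<lambda>_. 0) \<longrightarrow> eval3 c x1 x2 x3 \<noteq> 0)"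

definition is_triangle :: "real \<Rightarrow> real \<Rightarrow> real \<Rightarrow> bool" where
  "is_triangle l1 l2 l3 \<longleftrightarrow> l1 > 0 \<and> l2 > 0 \<and> l3 > 0 \<and>
     l1 < l2 + l3 \<and> l2 < l3 + l1 \<and> l3 < l1 + l2"

definition generic_triangle :: "real \<Rightarrow> real \<Rightarrow> real \<Rightarrow> bool" where
  "generic_triangle l1 l2 l3 \<longleftrightarrow> is_triangle l1 l2 l3 \<and>
     (\<exists>k>0. alg_indep3 (k * l1) (k * l2) (k * l3))"

text \<open>Interior angle opposite the edge of length a, the other edges being b and c
  (law of cosines).\<close>
definition opp_angle :: "real \<Rightarrow> real \<Rightarrow> real \<Rightarrow> real" where
  "opp_angle a b c = arccos ((b\<^sup>2 + c\<^sup>2 - a\<^sup>2) / (2 * b * c))"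

definition poly_at_angles :: "(exp6 \<Rightarrow> int) \<Rightarrow> real \<Rightarrow> real \<Rightarrow> real \<Rightarrow> real" where
  "poly_at_angles p l1 l2 l3 =
     (let a1 = opp_angle l1 l2 l3; a2 = opp_angle l2 l3 l1; a3 = opp_angle l3 l1 l2
      in eval6 p (sin a1) (sin a2) (sin a3) (cos a1) (cos a2) (cos a3))"

end

theory Submission imports Defs begin

text \<open>Multiplying the polynomial in the sines and cosines by a suitable power of \<open>2 l\<^sub>1 l\<^sub>2 l\<^sub>3\<close>
  turns it, by the law of cosines and \<open>sin \<alpha>\<^sub>i = \<surd>Q \<cdot> l\<^sub>i / (2 l\<^sub>1 l\<^sub>2 l\<^sub>3)\<close>, into
  \<open>P\<^sub>1 + \<surd>Q \<cdot> P\<^sub>2\<close> with integer polynomials \<open>P\<^sub>1, P\<^sub>2\<close> in the edge lengths and Heron's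
  polynomial \<open>Q\<close>. If this vanishes at a generic (rescaled) triangle, the norm
  \<open>P\<^sub>1\<^sup>2 - Q P\<^sub>2\<^sup>2\<close> vanishes there and hence identically. Translating the first edge by a
  large integer keeps the point algebraically independent but makes \<open>Q\<close> negative, where the
  identity \<open>P\<^sub>1\<^sup>2 = Q P\<^sub>2\<^sup>2\<close> forces \<open>P\<^sub>1 = P\<^sub>2 = 0\<close>; so \<open>P\<^sub>1\<close> and \<open>P\<^sub>2\<close> vanish identically.\<close>

inductive int_polyfun3 :: "(real \<Rightarrow> real \<Rightarrow> real \<Rightarrow> real) \<Rightarrow> bool" where
  const: "int_polyfun3 (\<lambda>x y z. of_int n)"
| var1: "int_polyfun3 (\<lambda>x y z. x)"
| var2: "int_polyfun3 (\<lambda>x y z. y)"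
| var3: "int_polyfun3 (\<lambda>x y z. z)"
| add: "int_polyfun3 f \<Longrightarrow> int_polyfun3 g \<Longrightarrow> int_polyfun3 (\<lambda>x y z. f x y z + g x y z)"
| mult: "int_polyfun3 f \<Longrightarrow> int_polyfun3 g \<Longrightarrow> int_polyfun3 (\<lambda>x y z. f x y z * g x y z)"

lemma int_polyfun3_numeral: "int_polyfun3 (\<lambda>x y z. numeral n)"
  using int_polyfun3.const[of "numeral n"] by simp

lemma int_polyfun3_zero: "int_polyfun3 (\<lambda>x y z. 0)"
  using int_polyfun3.const[of 0] by simp

lemma int_polyfun3_one: "int_polyfun3 (\<lambda>x y z. 1)"
  using int_polyfun3.const[of 1] by simp

lemma int_polyfun3_uminus: "int_polyfun3 f \<Longrightarrow> int_polyfun3 (\<lambda>x y z. - f x y z)"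
  using int_polyfun3.mult[OF int_polyfun3.const[of "-1"]] by simp

lemma int_polyfun3_diff:
  "int_polyfun3 f \<Longrightarrow> int_polyfun3 g \<Longrightarrow> int_polyfun3 (\<lambda>x y z. f x y z - g x y z)"
  using int_polyfun3.add[OF _ int_polyfun3_uminus] by simp

lemma int_polyfun3_power: "int_polyfun3 f \<Longrightarrow> int_polyfun3 (\<lambda>x y z. f x y z ^ n)"
  by (induction n) (auto intro: int_polyfun3_one int_polyfun3.mult)

lemma int_polyfun3_shift1: "int_polyfun3 f \<Longrightarrow> int_polyfun3 (\<lambda>x y z. f (x + of_int N) y z)"
  by (induction rule: int_polyfun3.induct) (auto intro: int_polyfun3.intros)

subsection \<open>Polynomial functions have integer coefficients\<close>

definition mon3 :: "exp3 \<Rightarrow> real \<Rightarrow> real \<Rightarrow> real \<Rightarrow> real" where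
  "mon3 m x y z = (case m of (a1, a2, a3) \<Rightarrow> x ^ a1 * y ^ a2 * z ^ a3)"

definition add_exp3 :: "exp3 \<Rightarrow> exp3 \<Rightarrow> exp3" where
  "add_exp3 m n = (case (m, n) of ((a1, a2, a3), (b1, b2, b3)) \<Rightarrow> (a1 + b1, a2 + b2, a3 + b3))"

lemma mon3_add_exp3: "mon3 (add_exp3 m n) x y z = mon3 m x y z * mon3 n x y z"
  by (cases m; cases n) (simp add: mon3_def add_exp3_def power_add)

lemma eval3_superset:
  assumes "finite S" "{m. c m \<noteq> 0} \<subseteq> S"
  shows "eval3 c x y z = (\<Sum>m\<in>S. of_int (c m) * mon3 m x y z)"
proof -
  have "eval3 c x y z = (\<Sum>m\<in>{m. c m \<noteq> 0}. of_int (c m) * mon3 m x y z)"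
    unfolding eval3_def mon3_def by (rule sum.cong) (auto simp: mult.assoc)
  also have "\<dots> = (\<Sum>m\<in>S. of_int (c m) * mon3 m x y z)"
    using assms by (intro sum.mono_neutral_left) auto
  finally show ?thesis .
qed

lemma eval3_single:
  "int_poly3 (\<lambda>m. if m = m0 then n else 0)"
  "eval3 (\<lambda>m. if m = m0 then n else 0) x y z = of_int n * mon3 m0 x y z"
proof -
  have sub: "{m. (if m = m0 then n else 0) \<noteq> 0} \<subseteq> {m0}" by auto
  then show "int_poly3 (\<lambda>m. if m = m0 then n else 0)"
    unfolding int_poly3_def using finite_subset by blast
  show "eval3 (\<lambda>m. if m = m0 then n else 0) x y z = of_int n * mon3 m0 x y z"
    using eval3_superset[OF _ sub] by simp
qed

lemma eval3_add:
  assumes "int_poly3 c1" "int_poly3 c2"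
  shows "int_poly3 (\<lambda>m. c1 m + c2 m)"
    and "eval3 (\<lambda>m. c1 m + c2 m) x y z = eval3 c1 x y z + eval3 c2 x y z"
proof -
  define S where "S = {m. c1 m \<noteq> 0} \<union> {m. c2 m \<noteq> 0}"
  have S: "finite S" using assms by (simp add: S_def int_poly3_def)
  have sub: "{m. c1 m + c2 m \<noteq> 0} \<subseteq> S" by (auto simp: S_def)
  then show "int_poly3 (\<lambda>m. c1 m + c2 m)"
    unfolding int_poly3_def using S finite_subset by blast
  show "eval3 (\<lambda>m. c1 m + c2 m) x y z = eval3 c1 x y z + eval3 c2 x y z"
    using S by (simp add: eval3_superset[OF S sub] eval3_superset[OF S] S_def
        sum.distrib[symmetric] distrib_right)
qed

lemma eval3_mult:
  assumes "int_poly3 c1" "int_poly3 c2"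
  obtains c where "int_poly3 c" "\<And>x y z. eval3 c x y z = eval3 c1 x y z * eval3 c2 x y z"
proof -
  define S1 where "S1 = {m. c1 m \<noteq> 0}"
  define S2 where "S2 = {m. c2 m \<noteq> 0}"
  have S12: "finite S1" "finite S2" using assms by (simp_all add: S1_def S2_def int_poly3_def)
  define P where "P = S1 \<times> S2"
  have P: "finite P" using S12 by (simp add: P_def)
  define S where "S = case_prod add_exp3 ` P"
  have S: "finite S" using P by (simp add: S_def)
  define c where "c = (\<lambda>m. \<Sum>q\<in>{q\<in>P. case_prod add_exp3 q = m}. c1 (fst q) * c2 (snd q))"
  have sub: "{m. c m \<noteq> 0} \<subseteq> S"
  proof
    fix m assume "m \<in> {m. c m \<noteq> 0}"
    have "{q\<in>P. case_prod add_exp3 q = m} \<noteq> {}"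
    proof
      assume E: "{q\<in>P. case_prod add_exp3 q = m} = {}"
      have "c m = 0" unfolding c_def E by simp
      with \<open>m \<in> {m. c m \<noteq> 0}\<close> show False by simp
    qed
    then show "m \<in> S" unfolding S_def by blast
  qed
  have "int_poly3 c" unfolding int_poly3_def using S sub finite_subset by blast
  moreover have "eval3 c x y z = eval3 c1 x y z * eval3 c2 x y z" for x y z
  proof -
    have "eval3 c1 x y z * eval3 c2 x y z
        = (\<Sum>a\<in>S1. of_int (c1 a) * mon3 a x y z) * (\<Sum>b\<in>S2. of_int (c2 b) * mon3 b x y z)"
      using S12 by (simp add: eval3_superset S1_def S2_def)
    also have "\<dots> = (\<Sum>q\<in>P. of_int (c1 (fst q) * c2 (snd q)) * mon3 (case_prod add_exp3 q) x y z)"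
      unfolding P_def sum_product sum.cartesian_product
      by (rule sum.cong) (auto simp: mon3_add_exp3)
    also have "\<dots> = (\<Sum>m\<in>S. \<Sum>q\<in>{q\<in>P. case_prod add_exp3 q = m}.
        of_int (c1 (fst q) * c2 (snd q)) * mon3 (case_prod add_exp3 q) x y z)"
      unfolding S_def by (rule sum.image_gen[OF P])
    also have "\<dots> = (\<Sum>m\<in>S. of_int (c m) * mon3 m x y z)"
      unfolding c_def of_int_sum sum_distrib_right by (rule sum.cong) auto
    also have "\<dots> = eval3 c x y z" using eval3_superset[OF S sub] by simp
    finally show ?thesis by simp
  qed
  ultimately show ?thesis using that by blast
qed

lemma int_polyfun3_eval3:
  assumes "int_polyfun3 f"
  obtains c where "int_poly3 c" "\<And>x y z. f x y z = eval3 c x y z"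
proof -
  from assms have "\<exists>c. int_poly3 c \<and> (\<forall>x y z. f x y z = eval3 c x y z)"
  proof induction
    case (const n)
    show ?case using eval3_single[of "(0, 0, 0)" n] by (auto simp: mon3_def)
  next
    case var1
    show ?case using eval3_single[of "(1, 0, 0)" 1] by (auto simp: mon3_def)
  next
    case var2
    show ?case using eval3_single[of "(0, 1, 0)" 1] by (auto simp: mon3_def)
  next
    case var3
    show ?case using eval3_single[of "(0, 0, 1)" 1] by (auto simp: mon3_def)
  next
    case (add f g)
    then obtain c1 c2 where "int_poly3 c1" "int_poly3 c2"
      "\<forall>x y z. f x y z = eval3 c1 x y z" "\<forall>x y z. g x y z = eval3 c2 x y z" by blast
    then show ?case using eval3_add[of c1 c2] by auto
  next
    case (mult f g)
    then obtain c1 c2 where "int_poly3 c1" "int_poly3 c2"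
      "\<forall>x y z. f x y z = eval3 c1 x y z" "\<forall>x y z. g x y z = eval3 c2 x y z" by blast
    then show ?case using eval3_mult[of c1 c2] by metis
  qed
  then show ?thesis using that by blast
qed

lemma int_polyfun3_vanishes_identically:
  assumes "alg_indep3 a b c" "int_polyfun3 f" "f a b c = 0"
  shows "f x y z = 0"
proof -
  obtain cf where cf: "int_poly3 cf" "\<And>x y z. f x y z = eval3 cf x y z"
    using int_polyfun3_eval3[OF assms(2)] by blast
  have "cf = (\<lambda>_. 0)" using assms(1,3) cf unfolding alg_indep3_def by auto
  then show ?thesis using cf by (simp add: eval3_def)
qed

text \<open>Translation by an integer preserves algebraic independence.\<close>
lemma int_polyfun3_vanishes_identically_shift1:
  assumes "alg_indep3 a b c" "int_polyfun3 f" "f (a + of_int N) b c = 0"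
  shows "f x y z = 0"
  using int_polyfun3_vanishes_identically[OF assms(1) int_polyfun3_shift1[OF assms(2)] assms(3),
      of "x - of_int N" y z]
  by simp

subsection \<open>Adjoining a square root\<close>

definition in_sqrt_ext ::
  "(real \<Rightarrow> real \<Rightarrow> real \<Rightarrow> real) \<Rightarrow> (real \<Rightarrow> real \<Rightarrow> real \<Rightarrow> real) \<Rightarrow> bool" where
  "in_sqrt_ext D g \<longleftrightarrow> (\<exists>P1 P2. int_polyfun3 P1 \<and> int_polyfun3 P2 \<and>
     (\<forall>x y z. 0 \<le> D x y z \<longrightarrow> g x y z = P1 x y z + sqrt (D x y z) * P2 x y z))"

lemma in_sqrt_ext_polyfun: "int_polyfun3 f \<Longrightarrow> in_sqrt_ext D f"
  unfolding in_sqrt_ext_def by (intro exI[of _ f] exI[of _ "\<lambda>x y z. 0"]) (auto intro: int_polyfun3_zero)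

lemma in_sqrt_ext_sqrt: "in_sqrt_ext D (\<lambda>x y z. sqrt (D x y z))"
  unfolding in_sqrt_ext_def
  by (intro exI[of _ "\<lambda>x y z. 0"] exI[of _ "\<lambda>x y z. 1"]) (auto intro: int_polyfun3_zero int_polyfun3_one)

lemma in_sqrt_ext_add:
  assumes "in_sqrt_ext D f" "in_sqrt_ext D g"
  shows "in_sqrt_ext D (\<lambda>x y z. f x y z + g x y z)"
proof -
  obtain P1 P2 R1 R2 where P: "int_polyfun3 P1" "int_polyfun3 P2" "int_polyfun3 R1" "int_polyfun3 R2"
    and f: "\<And>x y z. 0 \<le> D x y z \<Longrightarrow> f x y z = P1 x y z + sqrt (D x y z) * P2 x y z"
    and g: "\<And>x y z. 0 \<le> D x y z \<Longrightarrow> g x y z = R1 x y z + sqrt (D x y z) * R2 x y z"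
    using assms unfolding in_sqrt_ext_def by blast
  show ?thesis unfolding in_sqrt_ext_def
    by (intro exI[of _ "\<lambda>x y z. P1 x y z + R1 x y z"] exI[of _ "\<lambda>x y z. P2 x y z + R2 x y z"])
      (auto simp: f g algebra_simps intro: int_polyfun3.add P)
qed

lemma in_sqrt_ext_mult:
  assumes "int_polyfun3 D" "in_sqrt_ext D f" "in_sqrt_ext D g"
  shows "in_sqrt_ext D (\<lambda>x y z. f x y z * g x y z)"
proof -
  obtain P1 P2 R1 R2 where P: "int_polyfun3 P1" "int_polyfun3 P2" "int_polyfun3 R1" "int_polyfun3 R2"
    and f: "\<And>x y z. 0 \<le> D x y z \<Longrightarrow> f x y z = P1 x y z + sqrt (D x y z) * P2 x y z"
    and g: "\<And>x y z. 0 \<le> D x y z \<Longrightarrow> g x y z = R1 x y z + sqrt (D x y z) * R2 x y z"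
    using assms(2,3) unfolding in_sqrt_ext_def by blast
  have "f x y z * g x y z = (P1 x y z * R1 x y z + D x y z * (P2 x y z * R2 x y z))
      + sqrt (D x y z) * (P1 x y z * R2 x y z + P2 x y z * R1 x y z)" if "0 \<le> D x y z" for x y z
  proof -
    have "sqrt (D x y z) * sqrt (D x y z) = D x y z" using that by simp
    then show ?thesis using that by (simp add: f g algebra_simps)
  qed
  moreover have "int_polyfun3 (\<lambda>x y z. P1 x y z * R1 x y z + D x y z * (P2 x y z * R2 x y z))"
    "int_polyfun3 (\<lambda>x y z. P1 x y z * R2 x y z + P2 x y z * R1 x y z)"
    by (intro int_polyfun3.add int_polyfun3.mult assms(1) P)+
  ultimately show ?thesis unfolding in_sqrt_ext_def by blast
qed

lemma in_sqrt_ext_power: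
  "int_polyfun3 D \<Longrightarrow> in_sqrt_ext D f \<Longrightarrow> in_sqrt_ext D (\<lambda>x y z. f x y z ^ n)"
  by (induction n) (auto intro: in_sqrt_ext_polyfun int_polyfun3_one in_sqrt_ext_mult)

lemma in_sqrt_ext_sum:
  assumes "finite S" "\<And>i. i \<in> S \<Longrightarrow> in_sqrt_ext D (f i)"
  shows "in_sqrt_ext D (\<lambda>x y z. \<Sum>i\<in>S. f i x y z)"
  using assms by (induction S rule: finite_induct)
    (auto intro: in_sqrt_ext_polyfun int_polyfun3_zero in_sqrt_ext_add)

lemma in_sqrt_ext_vanishes_identically:
  assumes D: "int_polyfun3 D" and W: "in_sqrt_ext D W"
    and indep: "alg_indep3 a b c" and "W a b c = 0" "0 \<le> D a b c"
    and neg: "D (a + of_int N) b c < 0" and "0 \<le> D x y z"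
  shows "W x y z = 0"
proof -
  obtain P1 P2 where P: "int_polyfun3 P1" "int_polyfun3 P2"
    and WP: "\<And>x y z. 0 \<le> D x y z \<Longrightarrow> W x y z = P1 x y z + sqrt (D x y z) * P2 x y z"
    using W unfolding in_sqrt_ext_def by blast
  define G where "G = (\<lambda>x y z. P1 x y z ^ 2 - D x y z * P2 x y z ^ 2)"
  have G: "int_polyfun3 G"
    unfolding G_def by (intro int_polyfun3_diff int_polyfun3_power int_polyfun3.mult D P)
  have "P1 a b c = - sqrt (D a b c) * P2 a b c"
    using WP[of a b c] assms(4,5) by simp
  then have "G a b c = 0" using assms(5) by (simp add: G_def power_mult_distrib)
  then have "G (a + of_int N) b c = 0"
    using int_polyfun3_vanishes_identically[OF indep G] by blast
  then have "P1 (a + of_int N) b c ^ 2 = D (a + of_int N) b c * P2 (a + of_int N) b c ^ 2"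
    unfolding G_def by simp
  moreover have "D (a + of_int N) b c * P2 (a + of_int N) b c ^ 2 \<le> 0"
    using neg by (simp add: mult_nonpos_nonneg)
  ultimately have "P1 (a + of_int N) b c = 0" "P2 (a + of_int N) b c = 0"
    using neg by (smt (verit) zero_le_power2 power_eq_0_iff mult_neg_pos zero_less_power2)+
  then have "P1 x y z = 0" "P2 x y z = 0"
    using int_polyfun3_vanishes_identically_shift1[OF indep] P by blast+
  then show ?thesis using WP assms(7) by simp
qed

subsection \<open>Triangles\<close>

text \<open>Heron's polynomial, sixteen times the squared area of the triangle.\<close>
definition heron :: "real \<Rightarrow> real \<Rightarrow> real \<Rightarrow> real" where
  "heron x y z = (x + y + z) * (- x + y + z) * (x - y + z) * (x + y - z)"

lemma int_polyfun3_heron: "int_polyfun3 heron"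
proof -
  have "int_polyfun3 (\<lambda>x y z. (x + y + z) * ((- x) + y + z) * (x + (- y) + z) * (x + y + (- z)))"
    by (intro int_polyfun3.intros int_polyfun3_uminus)
  then show ?thesis by (simp add: heron_def[abs_def])
qed

lemma heron_rotate: "heron y z x = heron x y z"
  unfolding heron_def by (simp add: algebra_simps)

lemma heron_pos: "is_triangle x y z \<Longrightarrow> heron x y z > 0"
  unfolding is_triangle_def heron_def by (intro mult_pos_pos) auto

lemma heron_neg_shift:
  assumes "y > 0" "z > 0"
  obtains N :: int where "heron (x + of_int N) y z < 0"
proof
  define N where "N = \<lceil>y + z - x\<rceil> + 1"
  define u where "u = x + of_int N"
  have "u > y + z" unfolding u_def N_def by linarith
  then have "(u + y + z) * (- u + y + z) < 0" "(u - y + z) * (u + y - z) > 0"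
    using assms by (auto intro: mult_pos_neg mult_pos_pos)
  then have "(u + y + z) * (- u + y + z) * ((u - y + z) * (u + y - z)) < 0"
    by (rule mult_neg_pos)
  then show "heron (x + of_int N) y z < 0" by (simp add: heron_def u_def mult.assoc)
qed

lemma is_triangle_scale:
  "k > 0 \<Longrightarrow> is_triangle l1 l2 l3 \<Longrightarrow> is_triangle (k * l1) (k * l2) (k * l3)"
  unfolding is_triangle_def by (auto simp: distrib_left[symmetric])

lemma opp_angle_scale:
  assumes "k > 0" "b > 0" "c > 0"
  shows "opp_angle (k * a) (k * b) (k * c) = opp_angle a b c"
proof -
  have "((k * b)\<^sup>2 + (k * c)\<^sup>2 - (k * a)\<^sup>2) / (2 * (k * b) * (k * c))
      = (b\<^sup>2 + c\<^sup>2 - a\<^sup>2) / (2 * b * c)"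
    using assms by (simp add: field_simps power2_eq_square)
  then show ?thesis unfolding opp_angle_def by simp
qed

lemma poly_at_angles_scale:
  assumes "k > 0" "is_triangle l1 l2 l3"
  shows "poly_at_angles p (k * l1) (k * l2) (k * l3) = poly_at_angles p l1 l2 l3"
  using assms opp_angle_scale[OF assms(1)] by (simp add: poly_at_angles_def is_triangle_def)

lemma cos_sin_opp_angle:
  assumes "b > 0" "c > 0" "heron a b c > 0"
  shows "cos (opp_angle a b c) = (b\<^sup>2 + c\<^sup>2 - a\<^sup>2) / (2 * b * c)"
    and "sin (opp_angle a b c) = sqrt (heron a b c) / (2 * b * c)"
proof -
  define u where "u = (b\<^sup>2 + c\<^sup>2 - a\<^sup>2) / (2 * b * c)"
  have id: "1 - u\<^sup>2 = heron a b c / (2 * b * c)\<^sup>2"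
    using assms unfolding u_def heron_def by (simp add: field_simps power2_eq_square)
  moreover have "heron a b c / (2 * b * c)\<^sup>2 \<ge> 0" using assms(3) by simp
  ultimately have "\<bar>u\<bar> \<le> 1" using abs_le_square_iff[of u 1] by simp
  then show "cos (opp_angle a b c) = (b\<^sup>2 + c\<^sup>2 - a\<^sup>2) / (2 * b * c)"
    unfolding opp_angle_def u_def[symmetric] by (simp add: cos_arccos_abs)
  have "sin (opp_angle a b c) = sqrt (1 - u\<^sup>2)"
    unfolding opp_angle_def u_def[symmetric] using \<open>\<bar>u\<bar> \<le> 1\<close> by (simp add: sin_arccos_abs)
  also have "\<dots> = sqrt (heron a b c) / (2 * b * c)"
    unfolding id using assms by (simp add: real_sqrt_divide)
  finally show "sin (opp_angle a b c) = sqrt (heron a b c) / (2 * b * c)" .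
qed

subsection \<open>Clearing denominators\<close>

definition deg6 :: "exp6 \<Rightarrow> nat" where
  "deg6 m = (case m of (a1, a2, a3, a4, a5, a6) \<Rightarrow> a1 + a2 + a3 + a4 + a5 + a6)"

text \<open>A sum rather than a maximum of the degrees, so that the zero polynomial needs no
  special case.\<close>
definition deg_bound6 :: "(exp6 \<Rightarrow> int) \<Rightarrow> nat" where
  "deg_bound6 p = (\<Sum>m\<in>{m. p m \<noteq> 0}. deg6 m)"

lemma eval6_homogenize:
  assumes "int_poly6 p"
  shows "L ^ deg_bound6 p * eval6 p s1 s2 s3 s4 s5 s6 =
    (\<Sum>(a1, a2, a3, a4, a5, a6)\<in>{m. p m \<noteq> 0}. of_int (p (a1, a2, a3, a4, a5, a6))
      * (s1 * L) ^ a1 * (s2 * L) ^ a2 * (s3 * L) ^ a3 * (s4 * L) ^ a4 * (s5 * L) ^ a5 * (s6 * L) ^ a6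
      * L ^ (deg_bound6 p - (a1 + a2 + a3 + a4 + a5 + a6)))"
  unfolding eval6_def sum_distrib_left
proof (rule sum.cong[OF refl], clarify)
  fix a1 a2 a3 a4 a5 a6 assume "p (a1, a2, a3, a4, a5, a6) \<noteq> 0"
  then have "deg6 (a1, a2, a3, a4, a5, a6) \<le> deg_bound6 p"
    using assms unfolding deg_bound6_def int_poly6_def by (intro member_le_sum) auto
  define r where "r = deg_bound6 p - (a1 + a2 + a3 + a4 + a5 + a6)"
  have K: "deg_bound6 p = (a1 + a2 + a3 + a4 + a5 + a6) + r"
    using \<open>deg6 _ \<le> _\<close> by (simp add: deg6_def r_def)
  then show "L ^ deg_bound6 p * (of_int (p (a1, a2, a3, a4, a5, a6))
      * s1 ^ a1 * s2 ^ a2 * s3 ^ a3 * s4 ^ a4 * s5 ^ a5 * s6 ^ a6) =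
    of_int (p (a1, a2, a3, a4, a5, a6))
      * (s1 * L) ^ a1 * (s2 * L) ^ a2 * (s3 * L) ^ a3 * (s4 * L) ^ a4 * (s5 * L) ^ a5 * (s6 * L) ^ a6
      * L ^ (deg_bound6 p - (a1 + a2 + a3 + a4 + a5 + a6))"
    unfolding r_def[symmetric] K by (simp add: power_add power_mult_distrib ac_simps)
qed

definition cleared_angles_poly :: "(exp6 \<Rightarrow> int) \<Rightarrow> real \<Rightarrow> real \<Rightarrow> real \<Rightarrow> real" where
  "cleared_angles_poly p x y z =
    (\<Sum>(a1, a2, a3, a4, a5, a6)\<in>{m. p m \<noteq> 0}. of_int (p (a1, a2, a3, a4, a5, a6))
      * (sqrt (heron x y z) * x) ^ a1 * (sqrt (heron x y z) * y) ^ a2 * (sqrt (heron x y z) * z) ^ a3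
      * (x * (y\<^sup>2 + z\<^sup>2 - x\<^sup>2)) ^ a4 * (y * (z\<^sup>2 + x\<^sup>2 - y\<^sup>2)) ^ a5 * (z * (x\<^sup>2 + y\<^sup>2 - z\<^sup>2)) ^ a6
      * (2 * x * y * z) ^ (deg_bound6 p - (a1 + a2 + a3 + a4 + a5 + a6)))"

lemma in_sqrt_ext_cleared_angles_poly:
  assumes "int_poly6 p"
  shows "in_sqrt_ext heron (cleared_angles_poly p)"
proof -
  have "finite {m. p m \<noteq> 0}" using assms by (simp add: int_poly6_def)
  then show ?thesis
    unfolding cleared_angles_poly_def[abs_def] case_prod_unfold
    by (intro in_sqrt_ext_sum in_sqrt_ext_mult in_sqrt_ext_power in_sqrt_ext_sqrt
        in_sqrt_ext_polyfun int_polyfun3_heron int_polyfun3.intros int_polyfun3_diff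
        int_polyfun3_power int_polyfun3_numeral)
qed

lemma cleared_angles_poly_eq:
  assumes "int_poly6 p" "is_triangle x y z"
  shows "cleared_angles_poly p x y z = (2 * x * y * z) ^ deg_bound6 p * poly_at_angles p x y z"
proof -
  have pos: "x > 0" "y > 0" "z > 0" using assms(2) by (auto simp: is_triangle_def)
  have Q: "heron x y z > 0" "heron y z x > 0" "heron z x y > 0"
    using heron_pos[OF assms(2)] heron_rotate by metis+
  define L where "L = 2 * x * y * z"
  have e: "sin (opp_angle x y z) * L = sqrt (heron x y z) * x"
       "sin (opp_angle y z x) * L = sqrt (heron x y z) * y"
       "sin (opp_angle z x y) * L = sqrt (heron x y z) * z"
       "cos (opp_angle x y z) * L = x * (y\<^sup>2 + z\<^sup>2 - x\<^sup>2)"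
       "cos (opp_angle y z x) * L = y * (z\<^sup>2 + x\<^sup>2 - y\<^sup>2)"
       "cos (opp_angle z x y) * L = z * (x\<^sup>2 + y\<^sup>2 - z\<^sup>2)"
    unfolding cos_sin_opp_angle[OF pos(2,3) Q(1)] cos_sin_opp_angle[OF pos(3,1) Q(2)]
      cos_sin_opp_angle[OF pos(1,2) Q(3)] L_def
    using pos heron_rotate[of x y z] heron_rotate[of y z x] by (simp_all add: field_simps)
  have "L ^ deg_bound6 p * poly_at_angles p x y z = cleared_angles_poly p x y z"
    unfolding poly_at_angles_def Let_def eval6_homogenize[OF assms(1)] e
    by (simp add: cleared_angles_poly_def L_def)
  then show ?thesis by (simp add: L_def)
qed

theorem lemma2p3:
  fixes p :: "exp6 \<Rightarrow> int"
  assumes "int_poly6 p"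
    and "generic_triangle l1 l2 l3"
    and "poly_at_angles p l1 l2 l3 = 0"
    and "is_triangle m1 m2 m3"
  shows "poly_at_angles p m1 m2 m3 = 0"
proof -
  obtain k where k: "k > 0" "alg_indep3 (k * l1) (k * l2) (k * l3)" and l: "is_triangle l1 l2 l3"
    using assms(2) by (auto simp: generic_triangle_def)
  have kl: "is_triangle (k * l1) (k * l2) (k * l3)" using is_triangle_scale[OF k(1) l] .
  have "cleared_angles_poly p (k * l1) (k * l2) (k * l3) = 0"
    using cleared_angles_poly_eq[OF assms(1) kl] poly_at_angles_scale[OF k(1) l] assms(3) by simp
  moreover obtain N where "heron (k * l1 + of_int N) (k * l2) (k * l3) < 0"
    using heron_neg_shift kl unfolding is_triangle_def by blast
  ultimately have "cleared_angles_poly p m1 m2 m3 = 0"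
    using in_sqrt_ext_vanishes_identically[OF int_polyfun3_heron
        in_sqrt_ext_cleared_angles_poly[OF assms(1)] k(2)]
      heron_pos[OF kl] heron_pos[OF assms(4)] by (meson less_imp_le)
  moreover have "(2 * m1 * m2 * m3) ^ deg_bound6 p \<noteq> 0"
    using assms(4) by (auto simp: is_triangle_def)
  ultimately show ?thesis using cleared_angles_poly_eq[OF assms(1,4)] by (metis mult_eq_0_iff)
qed

end
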